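(* Let $V$ be the value function defined in the context, and for $\mathbf Q\in\mathcal Q$, $\mathbf u,\mathbf v\in\mathcal U$ let $J(\mathbf Q,\mathbf u)=g(\mathbf Q,\mathbf u)+\mathbb E[V(\mathbf Q')]$ and $\Delta_{\mathbf u,\mathbf v}(\mathbf Q)=J(\mathbf Q,\mathbf u)-J(\mathbf Q,\mathbf v)$. Then for all $\mathbf u,\mathbf v\in\mathcal U$: (1) if $u_0=m\in\mathcal M_0$, then $\Delta_{\mathbf u,\mathbf v}(\mathbf Q)$ is monotonically non-increasing in $Q_{0,m}$ and in $Q_{n,m}$ for every $n\in\mathcal N_m$ (all other components of $\mathbf Q$ held fixed); (2) if $u_n=m\in\mathcal M_n$ for some $n\in\mathcal N^+$, then $\Delta_{\mathbf u,\mathbf v}(\mathbf Q)$ is monotonically non-increasing in $Q_{n,m}$ (all other components of $\mathbf Q$ held fixed).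
   Context: Model. Let $N\ge 1$, $\mathcal N=\{0,1,\dots,N\}$ (base station $0$ is the macro base station, MBS) and $\mathcal N^+=\{1,\dots,N\}$ (small base stations, SBSs). Let $\mathcal M=\{1,\dots,M\}$ be the set of contents. For each $n\in\mathcal N$ let $\mathcal M_n\subseteq\mathcal M$ be the set of contents cached at BS $n$, with $\mathcal M_0=\mathcal M$; put $\tilde{\mathcal M}_n=\mathcal M_n\cup\{0\}$ and $\mathcal N_m=\{n\in\mathcal N^+: m\in\mathcal M_n\}$. Powers $p(n,m)\ge 0$ are given for $n\in\mathcal N$, $m\in\mathcal M_n$, and $p(n,0)=0$. A weight $w\ge 0$ is fixed. The feasible action space is $\mathcal U=\{\mathbf u=(u_n)_{n\in\mathcal N}: u_n\in\tilde{\mathcal M}_n\ \forall n,\ u_0\sum_{n\in\mathcal N^+}u_n=0\}$. A state is $\mathbf Q=(Q_{n,m})_{n\in\mathcal N,m\in\mathcal M_n}$ with $Q_{n,m}\in\mathcal Q_{n,m}=\{0,1,\dots,N_{n,m}\}$ for given positive integers $N_{n,m}$; $\mathcal Q=\prod_{n\in\mathcal N}\prod_{m\in\mathcal M_n}\mathcal Q_{n,m}$. Arrivals $A_{n,m}$ ($n\in\mathcal N$, $m\in\mathcal M$) are mutually independent nonnegative-integer random variables with fixed distributions, i.i.d. across time slots; $\tilde A_{0,m}=A_{0,m}+\sum_{n\in\mathcal N^+\setminus\mathcal N_m}A_{n,m}$. Given state $\mathbf Q$ and action $\mathbf u$, the next state $\mathbf Q'$ is $Q'_{0,m}=\min\{\mathbf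 1(u_0\neq m)Q_{0,m}+\tilde A_{0,m},N_{0,m}\}$ for $m\in\mathcal M_0$ and $Q'_{n,m}=\min\{\mathbf 1(u_0\neq m\text{ and }u_n\neq m)Q_{n,m}+A_{n,m},N_{n,m}\}$ for $n\in\mathcal N^+$, $m\in\mathcal M_n$; $\mathbb E$ denotes expectation over the arrivals. The per-stage cost is $g(\mathbf Q,\mathbf u)=d(\mathbf Q)+w\,p(\mathbf u)$ with $d(\mathbf Q)=\sum_{n\in\mathcal N}\sum_{m\in\mathcal M_n}Q_{n,m}$ and $p(\mathbf u)=\sum_{n\in\mathcal N}p(n,u_n)$. Value function. Fix a reference state $\mathbf Q^\dagger\in\mathcal Q$. Relative value iteration: $V_0\equiv 0$, $J_{l+1}(\mathbf Q,\mathbf u)=g(\mathbf Q,\mathbf u)+\mathbb E[V_l(\mathbf Q')]$, and $V_{l+1}(\mathbf Q)=\min_{\mathbf u\in\mathcal U}J_{l+1}(\mathbf Q,\mathbf u)-\min_{\mathbf u\in\mathcal U}J_{l+1}(\mathbf Q^\dagger,\mathbf u)$ for $l\ge0$. It is assumed (standing assumption of the paper, guaranteed under its unichain conditions) that $V_l$ converges pointwise to a function $V:\mathcal Q\to\mathbb R$; this $V$ is the value function, which solves the Bellman equation $\theta+V(\mathbf Q)=\min_{\mathbf u\in\mathcal U}\{g(\mathbf Q,\mathbf u)+\mathbb E[V(\mathbf Q')]\}$ for all $\mathbf Q$. *)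

theory Defs
  imports "HOL-Probability.Probability"
begin

text \<open>Base stations are 0..N (0 = MBS), contents 1..M.
 Action 0 at a BS means "idle". States and actions are encoded as total functions
 on nat, with out-of-range entries fixed to 0 (canonical encoding).\<close>

record netw =
  NB    :: nat
  MC    :: nat
  cache :: "nat \<Rightarrow> nat set"
  cap   :: "nat \<Rightarrow> nat \<Rightarrow> nat"
  pw    :: "nat \<Rightarrow> nat \<Rightarrow> real"
  wt    :: real
  arr   :: "nat \<Rightarrow> nat \<Rightarrow> nat pmf"

type_synonym state = "nat \<Rightarrow> nat \<Rightarrow> nat"
type_synonym action = "nat \<Rightarrow> nat"

definition wf_netw :: "netw \<Rightarrow> bool" where
  "wf_netw S \<longleftrightarrow> NB S \<ge> 1 \<and> cache S 0 = {1..MC S}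
     \<and> (\<forall>n\<in>{1..NB S}. cache S n \<subseteq> {1..MC S})
     \<and> (\<forall>n\<le>NB S. \<forall>m\<in>cache S n. cap S n m > 0 \<and> pw S n m \<ge> 0)
     \<and> (\<forall>n\<le>NB S. pw S n 0 = 0)
     \<and> wt S \<ge> 0"

definition Nset :: "netw \<Rightarrow> nat \<Rightarrow> nat set" where
  "Nset S m = {n\<in>{1..NB S}. m \<in> cache S n}"

definition actions :: "netw \<Rightarrow> action set" where
  "actions S = {u. (\<forall>n\<le>NB S. u n \<in> cache S n \<union> {0}) \<and> (\<forall>n>NB S. u n = 0)
                   \<and> u 0 * (\<Sum>n\<in>{1..NB S}. u n) = 0}"

definition states :: "netw \<Rightarrow> state set" where
  "states S = {Q. \<forall>n m. (n \<le> NB S \<and> m \<in> cache S n \<longrightarrow> Q n m \<le> cap S n m)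
                     \<and> (\<not> (n \<le> NB S \<and> m \<in> cache S n) \<longrightarrow> Q n m = 0)}"

definition arrivals :: "netw \<Rightarrow> (nat \<times> nat \<Rightarrow> nat) pmf" where
  "arrivals S = Pi_pmf ({0..NB S} \<times> {1..MC S}) 0 (\<lambda>(n,m). arr S n m)"

definition Atil0 :: "netw \<Rightarrow> (nat \<times> nat \<Rightarrow> nat) \<Rightarrow> nat \<Rightarrow> nat" where
  "Atil0 S A m = A (0,m) + (\<Sum>n\<in>{1..NB S} - Nset S m. A (n,m))"

definition next_state :: "netw \<Rightarrow> state \<Rightarrow> action \<Rightarrow> (nat \<times> nat \<Rightarrow> nat) \<Rightarrow> state" where
  "next_state S Q u A = (\<lambda>n m.
     if n = 0 \<and> m \<in> cache S 0 then
       min ((if u 0 \<noteq> m then Q 0 m else 0) + Atil0 S A m) (cap S 0 m)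
     else if 1 \<le> n \<and> n \<le> NB S \<and> m \<in> cache S n then
       min ((if u 0 \<noteq> m \<and> u n \<noteq> m then Q n m else 0) + A (n,m)) (cap S n m)
     else 0)"

definition delay :: "netw \<Rightarrow> state \<Rightarrow> real" where
  "delay S Q = (\<Sum>n\<in>{0..NB S}. \<Sum>m\<in>cache S n. real (Q n m))"

definition power :: "netw \<Rightarrow> action \<Rightarrow> real" where
  "power S u = (\<Sum>n\<in>{0..NB S}. pw S n (u n))"

definition cost :: "netw \<Rightarrow> state \<Rightarrow> action \<Rightarrow> real" where
  "cost S Q u = delay S Q + wt S * power S u"

definition Jfun :: "netw \<Rightarrow> (state \<Rightarrow> real) \<Rightarrow> state \<Rightarrow> action \<Rightarrow> real" where
  "Jfun S V Q u = cost S Q u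
     + measure_pmf.expectation (arrivals S) (\<lambda>A. V (next_state S Q u A))"

definition Jmin :: "netw \<Rightarrow> (state \<Rightarrow> real) \<Rightarrow> state \<Rightarrow> real" where
  "Jmin S V Q = Min ((\<lambda>u. Jfun S V Q u) ` actions S)"

fun rvi :: "netw \<Rightarrow> state \<Rightarrow> nat \<Rightarrow> state \<Rightarrow> real" where
  "rvi S Qr 0 = (\<lambda>_. 0)"
| "rvi S Qr (Suc l) = (\<lambda>Q. Jmin S (rvi S Qr l) Q - Jmin S (rvi S Qr l) Qr)"

definition updQ :: "state \<Rightarrow> nat \<Rightarrow> nat \<Rightarrow> nat \<Rightarrow> state" where
  "updQ Q n m x = Q(n := (Q n)(m := x))"

end

theory Submission
  imports Defs
begin

text \<open>The value function is non-decreasing in the state: the transition is monotone in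
  the state and the cost is non-decreasing in the delay, so every relative value iterate is
  monotone, and pointwise limits preserve this. If \<open>u\<close> serves content \<open>m\<close> at \<open>n\<close> (or the MBS
  broadcasts \<open>m\<close>), queue \<open>(n, m)\<close> is emptied, so the next state under \<open>u\<close> does not depend on
  \<open>Q\<^sub>n\<^sub>,\<^sub>m\<close>; the delay terms cancel in the difference, leaving \<open>Q\<^sub>n\<^sub>,\<^sub>m\<close> to enter only through
  the term \<open>-E[V(Q')]\<close> under \<open>v\<close>, which is non-increasing in it.\<close>

lemma finite_bounded_curried_funs:
  fixes C :: nat and I :: "('a \<times> 'b) set"
  assumes "finite I"
  shows "finite {Q :: 'a \<Rightarrow> 'b \<Rightarrow> nat. \<forall>i j. Q i j \<le> C \<and> ((i, j) \<notin> I \<longrightarrow> Q i j = 0)}"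
proof -
  let ?F = "{f. \<forall>x. (x \<in> I \<longrightarrow> f x \<in> {..C}) \<and> (x \<notin> I \<longrightarrow> f x = 0)}"
  have "finite ?F"
    using assms by (intro finite_set_of_finite_funs) auto
  moreover have "{Q. \<forall>i j. Q i j \<le> C \<and> ((i, j) \<notin> I \<longrightarrow> Q i j = 0)} \<subseteq> curry ` ?F"
  proof
    fix Q :: "'a \<Rightarrow> 'b \<Rightarrow> nat"
    assume "Q \<in> {Q. \<forall>i j. Q i j \<le> C \<and> ((i, j) \<notin> I \<longrightarrow> Q i j = 0)}"
    then have "case_prod Q \<in> ?F" by (simp add: split_paired_all)
    then show "Q \<in> curry ` ?F" using image_eqI[of Q curry "case_prod Q"] by simp
  qed
  ultimately show ?thesis by (rule finite_surj)
qed

lemma cache_subset: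
  assumes "wf_netw S" "n \<le> NB S"
  shows "cache S n \<subseteq> {1..MC S}"
  using assms unfolding wf_netw_def by (cases "n = 0") auto

lemma finite_states:
  assumes wf: "wf_netw S"
  shows "finite (states S)"
proof -
  let ?I = "{0..NB S} \<times> {1..MC S}"
  let ?C = "\<Sum>(n, m)\<in>?I. cap S n m"
  have bounded: "Q n m \<le> ?C" if Q: "Q \<in> states S" for Q n m
  proof (cases "n \<le> NB S \<and> m \<in> cache S n")
    case True
    then have "(n, m) \<in> ?I" using cache_subset[OF wf, of n] by auto
    then have "cap S n m \<le> ?C"
      using member_le_sum[of "(n, m)" ?I "case_prod (cap S)"] by simp
    moreover have "Q n m \<le> cap S n m" using Q True unfolding states_def by blast
    ultimately show ?thesis by linarith
  next
    case False
    then show ?thesis using Q unfolding states_def by simp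
  qed
  have supported: "Q n m = 0" if Q: "Q \<in> states S" and nm: "(n, m) \<notin> ?I" for Q n m
  proof -
    have "\<not> (n \<le> NB S \<and> m \<in> cache S n)"
      using nm cache_subset[OF wf, of n] by (auto simp: subset_iff)
    then show ?thesis using Q unfolding states_def by simp
  qed
  have "states S \<subseteq> {Q. \<forall>n m. Q n m \<le> ?C \<and> ((n, m) \<notin> ?I \<longrightarrow> Q n m = 0)}"
    using bounded supported by blast
  then show ?thesis
    using finite_bounded_curried_funs[of ?I ?C] by (auto intro: finite_subset)
qed

lemma finite_actions:
  assumes wf: "wf_netw S"
  shows "finite (actions S)"
proof -
  have "actions S \<subseteq> {u. \<forall>n. (n \<in> {0..NB S} \<longrightarrow> u n \<in> {0..MC S}) \<and> (n \<notin> {0..NB S} \<longrightarrow> u n = 0)}"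
    using cache_subset[OF wf] unfolding actions_def by fastforce
  moreover have "finite {u. \<forall>n. (n \<in> {0..NB S} \<longrightarrow> u n \<in> {0..MC S}) \<and> (n \<notin> {0..NB S} \<longrightarrow> u n = 0)}"
    by (intro finite_set_of_finite_funs) auto
  ultimately show ?thesis by (rule finite_subset)
qed

lemma idle_action_in_actions: "(\<lambda>_. 0) \<in> actions S"
  unfolding actions_def by auto

lemma next_state_in_states: "next_state S Q u A \<in> states S"
  unfolding states_def next_state_def by auto

lemma next_state_mono:
  assumes "Q \<le> Q'"
  shows "next_state S Q u A \<le> next_state S Q' u A"
proof (intro le_funI)
  fix n m
  have "Q n m \<le> Q' n m" "Q 0 m \<le> Q' 0 m"
    using assms by (auto simp: le_fun_def)
  then show "next_state S Q u A n m \<le> next_state S Q' u A n m"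
    unfolding next_state_def by (auto simp: min_def)
qed

lemma next_state_updQ_served:
  assumes "u 0 = m \<or> u n = m"
  shows "next_state S (updQ Q n m x) u = next_state S (updQ Q n m y) u"
  using assms unfolding next_state_def updQ_def by (intro ext) auto

lemma updQ_mono: "x \<le> y \<Longrightarrow> updQ Q n m x \<le> updQ Q n m y"
  unfolding updQ_def le_fun_def by auto

lemma delay_mono: "Q \<le> Q' \<Longrightarrow> delay S Q \<le> delay S Q'"
  unfolding delay_def le_fun_def by (intro sum_mono) auto

lemma integrable_next_state:
  fixes W :: "state \<Rightarrow> real"
  assumes wf: "wf_netw S"
  shows "integrable (measure_pmf (arrivals S)) (\<lambda>A. W (next_state S Q u A))"
proof (rule measure_pmf.integrable_const_bound)
  show "AE A in measure_pmf (arrivals S). norm (W (next_state S Q u A)) \<le> Max ((\<lambda>q. \<bar>W q\<bar>) ` states S)"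
    using finite_states[OF wf] next_state_in_states by (intro AE_I2) auto
qed simp

lemma expectation_next_state_mono:
  fixes W :: "state \<Rightarrow> real"
  assumes wf: "wf_netw S" and W: "mono_on (states S) W" and le: "Q \<le> Q'"
  shows "measure_pmf.expectation (arrivals S) (\<lambda>A. W (next_state S Q u A))
       \<le> measure_pmf.expectation (arrivals S) (\<lambda>A. W (next_state S Q' u A))"
proof (rule integral_mono[OF integrable_next_state[OF wf] integrable_next_state[OF wf]])
  fix A
  show "W (next_state S Q u A) \<le> W (next_state S Q' u A)"
    by (rule mono_onD[OF W next_state_in_states next_state_in_states next_state_mono[OF le]])
qed

lemma Jfun_mono:
  assumes "wf_netw S" "mono_on (states S) W" "Q \<le> Q'"
  shows "Jfun S W Q u \<le> Jfun S W Q' u"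
  unfolding Jfun_def cost_def
  using add_mono[OF delay_mono[OF assms(3)] expectation_next_state_mono[OF assms, of u]] by simp

lemma Jmin_mono:
  assumes wf: "wf_netw S" and W: "mono_on (states S) W" and le: "Q \<le> Q'"
  shows "Jmin S W Q \<le> Jmin S W Q'"
proof -
  have "Jfun S W Q' ` actions S \<noteq> {}"
    using idle_action_in_actions by blast
  then obtain u where u: "u \<in> actions S" "Jmin S W Q' = Jfun S W Q' u"
    using Min_in[of "Jfun S W Q' ` actions S"] finite_imageI[OF finite_actions[OF wf]]
    unfolding Jmin_def by fastforce
  have "Jmin S W Q \<le> Jfun S W Q u"
    unfolding Jmin_def using finite_actions[OF wf] u(1) by (intro Min_le) auto
  also have "\<dots> \<le> Jfun S W Q' u"
    by (rule Jfun_mono[OF wf W le])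
  finally show ?thesis using u(2) by simp
qed

lemma mono_on_rvi:
  assumes "wf_netw S"
  shows "mono_on (states S) (rvi S Qr l)"
proof (induction l)
  case 0
  show ?case by (simp add: mono_onI)
next
  case (Suc l)
  show ?case
    using Jmin_mono[OF assms Suc] by (auto intro: mono_onI)
qed

lemma mono_on_pointwise_limit:
  fixes f :: "nat \<Rightarrow> 'a::order \<Rightarrow> 'b::linorder_topology"
  assumes lim: "\<forall>x\<in>A. (\<lambda>l. f l x) \<longlonglongrightarrow> g x" and mono: "\<And>l. mono_on A (f l)"
  shows "mono_on A g"
proof (rule mono_onI)
  fix x y assume "x \<in> A" "y \<in> A" "x \<le> y"
  then show "g x \<le> g y"
    using lim mono by (intro LIMSEQ_le[of "\<lambda>l. f l x" _ "\<lambda>l. f l y"]) (auto dest: mono_onD)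
qed

lemma Jfun_diff:
  "Jfun S V Q u - Jfun S V Q v =
     wt S * (power S u - power S v)
     + measure_pmf.expectation (arrivals S) (\<lambda>A. V (next_state S Q u A))
     - measure_pmf.expectation (arrivals S) (\<lambda>A. V (next_state S Q v A))"
  unfolding Jfun_def cost_def by (simp add: algebra_simps)

lemma Jfun_diff_antimono_served:
  assumes wf: "wf_netw S" and V: "mono_on (states S) V"
    and served: "u 0 = m \<or> u n = m" and xy: "x \<le> y"
  shows "Jfun S V (updQ Q n m y) u - Jfun S V (updQ Q n m y) v
       \<le> Jfun S V (updQ Q n m x) u - Jfun S V (updQ Q n m x) v"
  using expectation_next_state_mono[OF wf V updQ_mono[OF xy], of Q n m v]
  unfolding Jfun_diff next_state_updQ_served[OF served, of S Q x y] by simp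

theorem lemma3:
  fixes S :: netw and Qr :: state and V :: "state \<Rightarrow> real"
  assumes wf: "wf_netw S"
    and ref: "Qr \<in> states S"
    and conv: "\<forall>Q\<in>states S. (\<lambda>l. rvi S Qr l Q) \<longlonglongrightarrow> V Q"
  shows "(\<forall>u\<in>actions S. \<forall>v\<in>actions S. \<forall>m\<in>cache S 0. u 0 = m \<longrightarrow>
            (\<forall>n\<in>{0} \<union> Nset S m. \<forall>Q\<in>states S. \<forall>x y. x \<le> y \<and> y \<le> cap S n m \<longrightarrow>
               Jfun S V (updQ Q n m y) u - Jfun S V (updQ Q n m y) v
                 \<le> Jfun S V (updQ Q n m x) u - Jfun S V (updQ Q n m x) v))
       \<and> (\<forall>u\<in>actions S. \<forall>v\<in>actions S. \<forall>n\<in>{1..NB S}. \<forall>m\<in>cache S n. u n = m \<longrightarrow>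
            (\<forall>Q\<in>states S. \<forall>x y. x \<le> y \<and> y \<le> cap S n m \<longrightarrow>
               Jfun S V (updQ Q n m y) u - Jfun S V (updQ Q n m y) v
                 \<le> Jfun S V (updQ Q n m x) u - Jfun S V (updQ Q n m x) v))"
proof -
  have V: "mono_on (states S) V"
    using mono_on_pointwise_limit[OF conv mono_on_rvi[OF wf]] .
  show ?thesis
    by (intro conjI ballI impI allI Jfun_diff_antimono_served[OF wf V]) auto
qed

end
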